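(* Let $\mathcal{G}$ be a DAG and let $\mathbf{A}$ and $\mathbf{B}$ be disjoint vertex sets. Then there exists a unique subset $\mathbf{C}$ of $\mathbf{B}$ such that $\mathbf{A}\perp\!\!\!\perp_{\mathcal{G}}\mathbf{B}\setminus\mathbf{C}\mid\mathbf{C}$ and such that no strict subset $\mathbf{C}'$ of $\mathbf{C}$ satisfies $\mathbf{A}\perp\!\!\!\perp_{\mathcal{G}}\mathbf{B}\setminus\mathbf{C}'\mid\mathbf{C}'$.
   Context: $\mathbf{U}\perp\!\!\!\perp_{\mathcal{G}}\mathbf{W}\mid\mathbf{Z}$ denotes d-separation in the DAG $\mathcal{G}$ (with the convention that the statement is trivially true when $\mathbf{W}=\emptyset$). *)

theory Defs
  imports Main
begin

definition dag :: "'v set \<Rightarrow> ('v \<times> 'v) set \<Rightarrow> bool" where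
  "dag V E \<longleftrightarrow> finite V \<and> E \<subseteq> V \<times> V \<and> acyclic E"

definition adjacent :: "('v \<times> 'v) set \<Rightarrow> 'v \<Rightarrow> 'v \<Rightarrow> bool" where
  "adjacent E a b \<longleftrightarrow> (a, b) \<in> E \<or> (b, a) \<in> E"

definition is_path :: "'v set \<Rightarrow> ('v \<times> 'v) set \<Rightarrow> 'v list \<Rightarrow> bool" where
  "is_path V E p \<longleftrightarrow> p \<noteq> [] \<and> set p \<subseteq> V \<and> distinct p \<and>
     (\<forall>i. Suc i < length p \<longrightarrow> adjacent E (p ! i) (p ! Suc i))"

definition collider :: "('v \<times> 'v) set \<Rightarrow> 'v list \<Rightarrow> nat \<Rightarrow> bool" where
  "collider E p i \<longleftrightarrow> (p ! (i - 1), p ! i) \<in> E \<and> (p ! Suc i, p ! i) \<in> E"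

definition blocked :: "('v \<times> 'v) set \<Rightarrow> 'v set \<Rightarrow> 'v list \<Rightarrow> bool" where
  "blocked E Z p \<longleftrightarrow> (\<exists>i. 0 < i \<and> Suc i < length p \<and>
     ((\<not> collider E p i \<and> p ! i \<in> Z) \<or>
      (collider E p i \<and> \<not> (\<exists>z\<in>Z. (p ! i, z) \<in> E\<^sup>*))))"

definition d_separated :: "'v set \<Rightarrow> ('v \<times> 'v) set \<Rightarrow> 'v set \<Rightarrow> 'v set \<Rightarrow> 'v set \<Rightarrow> bool" where
  "d_separated V E U W Z \<longleftrightarrow> W = {} \<or>
     (\<forall>p. is_path V E p \<and> hd p \<in> U \<and> last p \<in> W \<longrightarrow> blocked E Z p)"

end

theory Submission
  imports Defs
begin

text \<open>The sets \<open>C \<subseteq> B\<close> with \<open>A \<perp> B - C | C\<close> are closed under intersection. Given a path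
  from \<open>A\<close> to \<open>B - (C\<^sub>1 \<inter> C\<^sub>2)\<close>, cut it at its first vertex in \<open>B - (C\<^sub>1 \<inter> C\<^sub>2)\<close>: that prefix
  ends in \<open>B - C\<^sub>1\<close> or in \<open>B - C\<^sub>2\<close>, so it is blocked by \<open>C\<^sub>1\<close> or by \<open>C\<^sub>2\<close>, and since its
  inner vertices in \<open>B\<close> all lie in \<open>C\<^sub>1 \<inter> C\<^sub>2\<close>, the same vertex blocks the whole path given
  \<open>C\<^sub>1 \<inter> C\<^sub>2\<close>. The family contains \<open>B\<close>, which is finite, and a finite nonempty family closed
  under intersection has exactly one minimal member.\<close>

lemma ex1_minimal_if_Int_closed:
  assumes "finite B" and "P B"
    and Int_closed: "\<And>C D. C \<subseteq> B \<Longrightarrow> D \<subseteq> B \<Longrightarrow> P C \<Longrightarrow> P D \<Longrightarrow> P (C \<inter> D)"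
  shows "\<exists>!C. C \<subseteq> B \<and> P C \<and> (\<forall>C'. C' \<subset> C \<longrightarrow> \<not> P C')"
proof -
  let ?F = "{C. C \<subseteq> B \<and> P C}"
  have "finite ?F" using \<open>finite B\<close> by simp
  moreover have "?F \<noteq> {}" using \<open>P B\<close> by blast
  ultimately obtain C where C: "C \<in> ?F" and min: "\<And>D. D \<in> ?F \<Longrightarrow> D \<subseteq> C \<Longrightarrow> C = D"
    using finite_has_minimal by (metis (mono_tags, lifting))
  show ?thesis
  proof (rule ex1I)
    show "C \<subseteq> B \<and> P C \<and> (\<forall>C'. C' \<subset> C \<longrightarrow> \<not> P C')"
      using C min by blast
  next
    fix D assume D: "D \<subseteq> B \<and> P D \<and> (\<forall>C'. C' \<subset> D \<longrightarrow> \<not> P C')"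
    then have "P (D \<inter> C)" using C Int_closed by blast
    then have "D \<inter> C = D" using D by blast
    moreover have "C = D \<inter> C" using min[of "D \<inter> C"] \<open>P (D \<inter> C)\<close> C by auto
    ultimately show "D = C" by simp
  qed
qed

lemma d_separated_blocked:
  assumes "d_separated V E U W Z" and "is_path V E p" and "hd p \<in> U" and "last p \<in> W"
  shows "blocked E Z p"
  using assms unfolding d_separated_def by blast

lemma is_path_take:
  assumes "is_path V E p" and "0 < n"
  shows "is_path V E (take n p)"
  using assms unfolding is_path_def by (auto dest: in_set_takeD)

lemma blocked_take:
  assumes "blocked E Z (take n p)"
  shows "blocked E Z p"
proof -
  from assms obtain i where i: "0 < i" "Suc i < length (take n p)"
    and blocks: "(\<not> collider E (take n p) i \<and> take n p ! i \<in> Z) \<or>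
      (collider E (take n p) i \<and> \<not> (\<exists>z\<in>Z. (take n p ! i, z) \<in> E\<^sup>*))"
    unfolding blocked_def by blast
  have "take n p ! k = p ! k" if "k \<le> Suc i" for k
    using i that by simp
  then have "collider E (take n p) i = collider E p i" "take n p ! i = p ! i"
    unfolding collider_def by simp_all
  then show ?thesis
    unfolding blocked_def using i blocks by (intro exI[of _ i]) auto
qed

lemma blocked_shrink_conditioning_set:
  assumes "blocked E C p" and "Z \<subseteq> C"
    and "\<And>i. 0 < i \<Longrightarrow> Suc i < length p \<Longrightarrow> p ! i \<in> C \<Longrightarrow> p ! i \<in> Z"
  shows "blocked E Z p"
  using assms unfolding blocked_def by blast

lemma d_separated_Int:
  assumes sep1: "d_separated V E A (B - C\<^sub>1) C\<^sub>1" and sep2: "d_separated V E A (B - C\<^sub>2) C\<^sub>2"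
    and "C\<^sub>1 \<subseteq> B" and "C\<^sub>2 \<subseteq> B"
  shows "d_separated V E A (B - (C\<^sub>1 \<inter> C\<^sub>2)) (C\<^sub>1 \<inter> C\<^sub>2)"
  unfolding d_separated_def
proof (intro disjI2 allI impI)
  let ?Z = "C\<^sub>1 \<inter> C\<^sub>2"
  fix p assume p: "is_path V E p \<and> hd p \<in> A \<and> last p \<in> B - ?Z"
  then have "p \<noteq> []" unfolding is_path_def by blast
  then have "\<exists>j. j < length p \<and> p ! j \<in> B - ?Z"
    using p by (intro exI[of _ "length p - 1"]) (simp add: last_conv_nth)
  then obtain j where j: "j < length p" "p ! j \<in> B - ?Z"
    and first: "\<And>i. i < j \<Longrightarrow> p ! i \<notin> B - ?Z"
    unfolding exists_least_iff[of "\<lambda>j. j < length p \<and> p ! j \<in> B - ?Z"] by force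
  let ?q = "take (Suc j) p"
  have q: "is_path V E ?q" "hd ?q \<in> A" "last ?q = p ! j"
    using p is_path_take[of V E p "Suc j"] by simp_all (simp add: j take_Suc_conv_app_nth)
  have shrink: "blocked E ?Z ?q" if "blocked E C ?q" "?Z \<subseteq> C" "C \<subseteq> B" for C
    using that(1,2)
  proof (rule blocked_shrink_conditioning_set)
    fix i assume "Suc i < length ?q" and "?q ! i \<in> C"
    then have "i < j" and "p ! i \<in> C" by simp_all
    then show "?q ! i \<in> ?Z" using first \<open>C \<subseteq> B\<close> by auto
  qed
  have "blocked E ?Z ?q"
  proof (cases "p ! j \<in> C\<^sub>1")
    case True
    then have "last ?q \<in> B - C\<^sub>2" using j q(3) by auto
    then show ?thesis
      using d_separated_blocked[OF sep2 q(1,2)] shrink \<open>C\<^sub>2 \<subseteq> B\<close> by blast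
  next
    case False
    then have "last ?q \<in> B - C\<^sub>1" using j q(3) by auto
    then show ?thesis
      using d_separated_blocked[OF sep1 q(1,2)] shrink \<open>C\<^sub>1 \<subseteq> B\<close> by blast
  qed
  then show "blocked E ?Z p" by (rule blocked_take)
qed

theorem lemma7:
  fixes V :: "'v set" and E :: "('v \<times> 'v) set" and A B :: "'v set"
  assumes "dag V E" and "A \<subseteq> V" and "B \<subseteq> V" and "A \<inter> B = {}"
  shows "\<exists>!C. C \<subseteq> B \<and> d_separated V E A (B - C) C \<and>
           (\<forall>C'. C' \<subset> C \<longrightarrow> \<not> d_separated V E A (B - C') C')"
proof (rule ex1_minimal_if_Int_closed)
  show "finite B" using assms(1,3) unfolding dag_def by (auto intro: finite_subset)
  show "d_separated V E A (B - B) B" by (simp add: d_separated_def)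
qed (rule d_separated_Int)

end
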